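(* Let $k\ge2$ be an even integer. In the maximum-cardinality online matching problem under edge arrivals with a hard budget of $k$ reassignments per arrival (defined in the context), the shortest-augmenting-path algorithm described in the context is $(1-\frac{2}{k+2})$-competitive: on every instance, the matching it outputs has cardinality at least $(1-\frac{2}{k+2})\cdot\mathsf{OPT}$, where $\mathsf{OPT}$ is the maximum cardinality of a matching in the revealed graph.
   Context: Problem: $G=(V,E)$ is a graph, not necessarily bipartite. The algorithm initially knows $V$ and $k$. Over $|E|$ timesteps the edges of $G$ are revealed one at a time. At the end of each timestep the algorithm must output a matching in the graph revealed so far. The new matching $M_2$ must be obtainable from the previous matching $M_1$ (empty before the first timestep) by at most $k$ (re)assignments, the number of (re)assignments being the number of vertices of nonzero degree in $M_1\triangle M_2$; once a vertex is matched it must remain matched at all later timesteps. An augmenting path with respect to a matching $M$ is a path between two distinct vertices not covered by $M$ whose edges alternate between edges not in $M$ and edges in $M$; its length is its number of edges. Algorithm: when an edge $e$ arrives, among all augmenting paths in the current graph with respect to the current matching $M$ that contain $e$, choose a shortest one $P$; if none exists or its length exceeds $k-1$, keep $M$; otherwise output $M\triangle P$. *)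

theory Defs
  imports Complex_Main
begin

text \<open>Undirected edges are 2-element vertex sets; a graph is given by its edge set.\<close>

definition matching :: "'a set set \<Rightarrow> bool" where
  "matching M \<longleftrightarrow> (\<forall>e\<in>M. \<forall>f\<in>M. e \<noteq> f \<longrightarrow> e \<inter> f = {})"

definition matching_in :: "'a set set \<Rightarrow> 'a set set \<Rightarrow> bool" where
  "matching_in G M \<longleftrightarrow> M \<subseteq> G \<and> matching M"

definition OPT :: "'a set set \<Rightarrow> nat" where
  "OPT G = Max {card M | M. matching_in G M}"

fun path_edges :: "'a list \<Rightarrow> 'a set set" where
  "path_edges [] = {}"
| "path_edges [x] = {}"
| "path_edges (x # y # xs) = insert {x, y} (path_edges (y # xs))"

definition path_len :: "'a list \<Rightarrow> nat" where
  "path_len p = length p - 1"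

definition augmenting_path :: "'a set set \<Rightarrow> 'a set set \<Rightarrow> 'a list \<Rightarrow> bool" where
  "augmenting_path G M p \<longleftrightarrow>
     distinct p \<and> length p \<ge> 2 \<and>
     (\<forall>i < length p - 1. {p ! i, p ! Suc i} \<in> G \<and> ({p ! i, p ! Suc i} \<in> M \<longleftrightarrow> odd i)) \<and>
     hd p \<notin> \<Union>M \<and> last p \<notin> \<Union>M"

text \<open>One step of the algorithm: G is the graph revealed so far (already containing the
  new edge e), M the current matching, M' the output. Ties between shortest paths are
  broken arbitrarily (all choices are allowed).\<close>
definition alg_step :: "nat \<Rightarrow> 'a set set \<Rightarrow> 'a set set \<Rightarrow> 'a set \<Rightarrow> 'a set set \<Rightarrow> bool" where
  "alg_step k G M e M' \<longleftrightarrow>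
     (let P = {p. augmenting_path G M p \<and> e \<in> path_edges p} in
       ((\<forall>p\<in>P. path_len p > k - 1) \<and> M' = M)
       \<or> (\<exists>p\<in>P. (\<forall>q\<in>P. path_len p \<le> path_len q) \<and> path_len p \<le> k - 1
               \<and> M' = M - path_edges p \<union> (path_edges p - M)))"

inductive alg_run :: "nat \<Rightarrow> 'a set list \<Rightarrow> 'a set set \<Rightarrow> bool" where
  init: "alg_run k [] {}"
| step: "alg_run k es M \<Longrightarrow> alg_step k (set (es @ [e])) M e M' \<Longrightarrow> alg_run k (es @ [e]) M'"

end

theory Submission
  imports Defs
begin

text \<open>The algorithm maintains the invariant that the current matching M has no augmenting
  path of length less than k. Suppose M is augmented along a shortest augmenting path P through
  the new edge e, and the result still had an augmenting path Q shorter than k. Then the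
  matching obtained by augmenting along Q as well has two more edges than M, and its symmetric
  difference with M, which lies inside P \<union> Q, contains two edge-disjoint M-augmenting paths.
  At most one of them uses e, so one has length at least k and the other at least |P|, which
  together exceed |P| + |Q|.

  At the end, for a maximum matching N, the symmetric difference of M and N contains
  |N| - |M| edge-disjoint M-augmenting paths (found by peeling off its components, grown as
  maximal alternating paths). Each has odd length at least k + 1, hence at least k/2 edges
  of M, so (|N| - |M|) k/2 \<le> |M|.\<close>

lemma length_ge_2_cases:
  assumes "2 \<le> length p"
  obtains x y xs where "p = x # y # xs"
  using assms by (cases p; cases "tl p") auto

lemma path_edges_subset_set: "e \<in> path_edges p \<Longrightarrow> e \<subseteq> set p"
  by (induction p rule: path_edges.induct) auto

lemma finite_path_edges: "finite (path_edges p)"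
  by (induction p rule: path_edges.induct) auto

lemma card_path_edges: "distinct p \<Longrightarrow> card (path_edges p) = path_len p"
  unfolding path_len_def
proof (induction p rule: path_edges.induct)
  case (3 x y xs)
  have "{x, y} \<notin> path_edges (y # xs)"
    using path_edges_subset_set[of "{x, y}" "y # xs"] "3.prems" by auto
  with 3 show ?case by (simp add: finite_path_edges)
qed auto

lemma path_edges_iff_nth: "e \<in> path_edges p \<longleftrightarrow> (\<exists>i < length p - 1. e = {p ! i, p ! Suc i})"
  by (induction p rule: path_edges.induct) (auto simp: Ex_less_Suc2)

lemma Union_path_edges: "2 \<le> length p \<Longrightarrow> \<Union>(path_edges p) = set p"
proof (induction p rule: path_edges.induct)
  case (3 x y xs)
  then show ?case by (cases xs) auto
qed auto

lemma path_edge_at_hd: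
  "distinct (x # y # xs) \<Longrightarrow> e \<in> path_edges (x # y # xs) \<Longrightarrow> x \<in> e \<Longrightarrow> e = {x, y}"
  using path_edges_subset_set[of e "y # xs"] by auto

lemma matching_edge_unique: "matching M \<Longrightarrow> e \<in> M \<Longrightarrow> f \<in> M \<Longrightarrow> x \<in> e \<Longrightarrow> x \<in> f \<Longrightarrow> e = f"
  unfolding matching_def by blast

lemma matching_subset: "matching M \<Longrightarrow> M' \<subseteq> M \<Longrightarrow> matching M'"
  unfolding matching_def by blast

lemma card_Union_matching:
  assumes "matching M" "finite M" "\<forall>e\<in>M. card e = 2"
  shows "card (\<Union>M) = 2 * card M"
proof -
  have "card (\<Union>M) = sum card M"
    using assms by (intro card_Union_disjoint) (auto simp: pairwise_def disjnt_def matching_def card_2_iff)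
  with assms(3) show ?thesis by simp
qed

lemma finite_Union_edges: "finite E \<Longrightarrow> \<forall>e\<in>E. card e = 2 \<Longrightarrow> finite (\<Union>E)"
  by (metis card.infinite finite_Union zero_neq_numeral)

fun alternates :: "bool \<Rightarrow> 'a set set \<Rightarrow> 'a set set \<Rightarrow> 'a list \<Rightarrow> bool" where
  "alternates c M N (x # y # xs) \<longleftrightarrow>
     {x, y} \<in> (if c then N - M else M - N) \<and> alternates (\<not> c) M N (y # xs)"
| "alternates c M N _ \<longleftrightarrow> True"

lemma alternates_iff_nth:
  "alternates c M N p \<longleftrightarrow>
     (\<forall>i < length p - 1. {p ! i, p ! Suc i} \<in> (if c = even i then N - M else M - N))"
  by (induction c M N p rule: alternates.induct) (auto simp: All_less_Suc2)

lemma alternates_path_edges: "alternates c M N p \<Longrightarrow> path_edges p \<subseteq> sym_diff M N"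
  by (induction c M N p rule: alternates.induct) (auto split: if_splits)

lemma alternates_mono:
  "alternates c M' N' p \<Longrightarrow> N' - M' \<subseteq> N - M \<Longrightarrow> M' - N' \<subseteq> M - N \<Longrightarrow> alternates c M N p"
  by (induction c M' N' p rule: alternates.induct) (auto split: if_splits)

lemma alternates_swap: "alternates c M N p \<longleftrightarrow> alternates (\<not> c) N M p"
  by (induction c M N p rule: alternates.induct) auto

lemma card_alternates_edges:
  assumes "distinct p" "alternates c M N p"
  shows "card (path_edges p \<inter> (N - M)) = (if c then length p div 2 else (length p - 1) div 2)"
  using assms
proof (induction c M N p rule: alternates.induct)
  case (1 c M N x y xs)
  have "{x, y} \<notin> path_edges (y # xs)"
    using path_edges_subset_set[of "{x, y}" "y # xs"] "1.prems"(1) by auto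
  with 1 show ?case by (cases c) (auto simp: finite_path_edges Int_insert_left)
qed auto

lemma card_alternates_edges_balance:
  assumes "distinct p" "alternates (even (length p)) M N p" "2 \<le> length p"
  shows "card (path_edges p \<inter> (N - M)) =
    card (path_edges p \<inter> (M - N)) + (if even (length p) then 1 else 0)"
proof -
  have "alternates (odd (length p)) N M p"
    using assms(2) alternates_swap[of "even (length p)" M N p] by simp
  from card_alternates_edges[OF assms(1) this] card_alternates_edges[OF assms(1,2)] assms(3)
  show ?thesis by presburger
qed

lemma alternates_interior_vertex:
  assumes "alternates c M N p" "z \<in> set p" "z \<noteq> hd p" "z \<noteq> last p"
  shows "(\<exists>e\<in>path_edges p. e \<in> M - N \<and> z \<in> e) \<and> (\<exists>e\<in>path_edges p. e \<in> N - M \<and> z \<in> e)"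
  using assms
proof (induction c M N p rule: alternates.induct)
  case (1 c M N x y xs)
  show ?case
  proof (cases "z = y")
    case True
    with "1.prems" obtain w ws where "xs = w # ws" by (cases xs) auto
    with True "1.prems"(1) show ?thesis by (cases c) auto
  next
    case False
    with 1 show ?thesis by auto
  qed
qed auto

lemma alternates_adjacent_edges:
  assumes "distinct p" "alternates c M N p" "e \<in> path_edges p" "f \<in> path_edges p"
    "z \<in> e" "z \<in> f" "e \<noteq> f"
  shows "e \<in> M \<longleftrightarrow> f \<notin> M"
  using assms
proof (induction c M N p arbitrary: e f rule: alternates.induct)
  case (1 c M N x y xs)
  have first_edge: "a \<in> M \<longleftrightarrow> b \<notin> M"
    if "a = {x, y}" "b \<in> path_edges (y # xs)" "z \<in> a" "z \<in> b" for a b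
  proof -
    have "z = y"
      using that path_edges_subset_set[of b "y # xs"] "1.prems"(1) by auto
    with that obtain w ws where xs: "xs = w # ws" by (cases xs) auto
    with that \<open>z = y\<close> "1.prems"(1) have "b = {y, w}"
      using path_edge_at_hd[of y w ws b] by auto
    with that xs "1.prems"(2) show ?thesis by (cases c) auto
  qed
  show ?case
  proof (cases "e = {x, y} \<or> f = {x, y}")
    case True
    with "1.prems" first_edge[of e f] first_edge[of f e] show ?thesis by auto
  next
    case False
    with "1.prems" show ?thesis using "1.IH"[of e f] by auto
  qed
qed auto

lemma augmenting_path_edges: "augmenting_path G M p \<Longrightarrow> path_edges p \<subseteq> G"
  unfolding augmenting_path_def by (auto simp: path_edges_iff_nth)

lemma augmenting_path_insert:
  assumes "augmenting_path (insert e G) M p" "e \<notin> path_edges p"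
  shows "augmenting_path G M p"
proof -
  have "{p ! i, p ! Suc i} \<noteq> e" if "i < length p - 1" for i
    using assms(2) that by (auto simp: path_edges_iff_nth)
  with assms(1) show ?thesis unfolding augmenting_path_def by auto
qed

lemma odd_path_len_augmenting_path:
  assumes "augmenting_path G M p"
  shows "odd (path_len p)"
proof -
  define i where "i = length p - 2"
  have p: "length p \<ge> 2" "last p \<notin> \<Union>M" "p \<noteq> []"
    using assms unfolding augmenting_path_def by auto
  then have i: "i < length p - 1" "last p = p ! Suc i"
    by (auto simp: i_def last_conv_nth Suc_diff_Suc numeral_2_eq_2)
  have "{p ! i, p ! Suc i} \<in> M \<longleftrightarrow> odd i"
    using assms i(1) unfolding augmenting_path_def by blast
  with i p have "even i" by auto
  with p show ?thesis by (simp add: i_def path_len_def)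
qed

lemma card_path_edges_augmenting_path:
  "augmenting_path G M p \<Longrightarrow> card (path_edges p) = path_len p"
  unfolding augmenting_path_def by (simp add: card_path_edges)

lemma augmenting_path_alternates:
  "augmenting_path G M p \<Longrightarrow> alternates True M (sym_diff M (path_edges p)) p"
  unfolding alternates_iff_nth augmenting_path_def by (auto simp: path_edges_iff_nth)

lemma augmenting_path_empty: "\<not> augmenting_path {} M p"
proof
  assume "augmenting_path {} M p"
  then have len: "2 \<le> length p" and edges: "\<forall>i < length p - 1. {p ! i, p ! Suc i} \<in> ({} :: 'a set set)"
    unfolding augmenting_path_def by blast+
  from len have "0 < length p - 1"
    by simp
  with edges show False
    by blast
qed

lemma card_augmenting_path_matched_edges:
  assumes "augmenting_path G M p"
  shows "card (path_edges p \<inter> M) = path_len p div 2"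
proof -
  have "distinct p" "alternates False (sym_diff M (path_edges p)) M p"
    using assms augmenting_path_alternates alternates_swap[of True M _ p]
    unfolding augmenting_path_def by auto
  moreover have "path_edges p \<inter> (M - sym_diff M (path_edges p)) = path_edges p \<inter> M"
    by blast
  ultimately show ?thesis
    using card_alternates_edges[of p False "sym_diff M (path_edges p)" M] by (simp add: path_len_def)
qed

lemma matching_augment:
  assumes M: "matching M" and p: "augmenting_path G M p"
  shows "matching (sym_diff M (path_edges p))"
  unfolding matching_def
proof (intro ballI impI)
  let ?E = "path_edges p"
  have alt: "alternates True M (sym_diff M ?E) p"
    using p by (rule augmenting_path_alternates)
  have p_props: "distinct p" "hd p \<notin> \<Union>M" "last p \<notin> \<Union>M"
    using p unfolding augmenting_path_def by auto
  have no_mixed: "f \<inter> g = {}" if f: "f \<in> M - ?E" and g: "g \<in> ?E - M" for f g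
  proof (rule ccontr)
    assume "f \<inter> g \<noteq> {}"
    then obtain x where x: "x \<in> f" "x \<in> g" by auto
    then have "x \<in> set p" "x \<noteq> hd p" "x \<noteq> last p"
      using path_edges_subset_set f g p_props by blast+
    then obtain h where h: "h \<in> ?E" "h \<in> M" "x \<in> h"
      using alternates_interior_vertex[OF alt] by blast
    then have "f = h"
      using matching_edge_unique[OF M, of f h x] f x by blast
    with f h show False by blast
  qed
  fix f g assume fg: "f \<in> sym_diff M ?E" "g \<in> sym_diff M ?E" "f \<noteq> g"
  then consider "f \<in> M" "g \<in> M" | "f \<in> M - ?E" "g \<in> ?E - M" | "g \<in> M - ?E" "f \<in> ?E - M"
    | "f \<in> ?E - M" "g \<in> ?E - M"
    by blast
  then show "f \<inter> g = {}"
  proof cases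
    case 1
    with M fg(3) show ?thesis unfolding matching_def by blast
  next
    case 2
    then show ?thesis by (rule no_mixed)
  next
    case 3
    then show ?thesis using no_mixed by blast
  next
    case 4
    with alternates_adjacent_edges[OF p_props(1) alt, of f g] fg(3) show ?thesis by blast
  qed
qed

lemma card_augment:
  assumes "finite M" "augmenting_path G M p"
  shows "card (sym_diff M (path_edges p)) = card M + 1"
proof -
  let ?E = "path_edges p"
  have "card ?E = path_len p" "odd (path_len p)"
    using card_path_edges_augmenting_path[OF assms(2)] odd_path_len_augmenting_path[OF assms(2)] .
  moreover have "card (?E \<inter> M) = path_len p div 2"
    using assms(2) by (rule card_augmenting_path_matched_edges)
  moreover have "card ?E = card (?E \<inter> M) + card (?E - M)"
    by (rule card_Int_Diff[OF finite_path_edges])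
  moreover have "card M = card (M \<inter> ?E) + card (M - ?E)"
    using assms(1) by (rule card_Int_Diff)
  moreover have "card (sym_diff M ?E) = card (M - ?E) + card (?E - M)"
    using assms(1) by (intro card_Un_disjoint) (auto simp: finite_path_edges)
  ultimately show ?thesis
    by (simp add: Int_commute) presburger
qed

lemma matching_in_augment:
  assumes "matching_in G M" "augmenting_path G M p"
  shows "matching_in G (sym_diff M (path_edges p))"
  using assms matching_augment augmenting_path_edges unfolding matching_in_def by blast

lemma alternating_path_closed:
  assumes M: "matching M" and N: "matching N"
    and p: "alternates c M N p" "2 \<le> length p" "last p \<notin> \<Union>M"
    and z: "z \<in> set p" "z \<noteq> hd p" and f: "f \<in> sym_diff M N" "z \<in> f"
  shows "f \<in> path_edges p"
proof (cases "z = last p")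
  case True
  then obtain h where h: "h \<in> path_edges p" "z \<in> h"
    using z(1) Union_path_edges[OF p(2)] by blast
  then have "h \<in> N"
    using alternates_path_edges[OF p(1)] p(3) True by blast
  moreover have "f \<in> N"
    using f p(3) True by blast
  ultimately show ?thesis
    using matching_edge_unique[OF N, of f h z] f(2) h by blast
next
  case False
  then obtain h1 h2 where h: "h1 \<in> path_edges p" "h1 \<in> M - N" "z \<in> h1"
    "h2 \<in> path_edges p" "h2 \<in> N - M" "z \<in> h2"
    using alternates_interior_vertex[OF p(1) z] by blast
  show ?thesis
  proof (cases "f \<in> M")
    case True
    with h matching_edge_unique[OF M, of f h1 z] f(2) show ?thesis by blast
  next
    case False
    with h f matching_edge_unique[OF N, of f h2 z] show ?thesis by blast
  qed
qed

lemma alternating_component: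
  assumes M: "matching M" and N: "matching N"
    and p: "alternates c M N p" "2 \<le> length p" "last p \<notin> \<Union>M"
    and hd: "hd p \<notin> \<Union>(if c then M else N)"
  shows "\<forall>f\<in>sym_diff M N. f \<inter> \<Union>(path_edges p) \<noteq> {} \<longrightarrow> f \<in> path_edges p"
proof (intro ballI impI)
  fix f assume f: "f \<in> sym_diff M N" "f \<inter> \<Union>(path_edges p) \<noteq> {}"
  then obtain z where z: "z \<in> f" "z \<in> set p"
    using Union_path_edges[OF p(2)] by blast
  show "f \<in> path_edges p"
  proof (cases "z = hd p")
    case True
    obtain y ys where p_eq: "p = z # y # ys"
      using p(2) True by (elim length_ge_2_cases) simp
    then have first: "{z, y} \<in> (if c then N - M else M - N)"
      using p(1) by simp
    moreover have "f \<in> (if c then N - M else M - N)"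
      using f(1) hd True z(1) by (cases c) auto
    ultimately have "f = {z, y}"
      using matching_edge_unique[OF M, of f "{z, y}" z] matching_edge_unique[OF N, of f "{z, y}" z] z(1)
      by (cases c) auto
    with p_eq show ?thesis by simp
  next
    case False
    with alternating_path_closed[OF M N p z(2) _ f(1) z(1)] show ?thesis by blast
  qed
qed

lemma alternating_path_extend_at_hd:
  assumes M: "matching M" and N: "matching N" and edges: "\<forall>e\<in>M \<union> N. card e = 2"
    and p: "distinct p" "alternates (even (length p)) M N p" "2 \<le> length p" "last p \<notin> \<Union>M"
    and hd: "hd p \<in> \<Union>(if even (length p) then M else N)"
  obtains w where "w \<in> \<Union>(M \<union> N) - set p" "alternates (even (length (w # p))) M N (w # p)"
proof -
  define c where "c = even (length p)"
  define A where "A = (if c then M else N)"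
  define B where "B = (if c then N else M)"
  have AB: "matching B" "A - B \<subseteq> sym_diff M N" "A - B = (if \<not> c then N - M else M - N)"
    using M N by (auto simp: A_def B_def)
  obtain v y ys where p_eq: "p = v # y # ys"
    using p(3) by (elim length_ge_2_cases)
  have vy: "{v, y} \<in> B - A"
    using p(2) p_eq by (auto simp: A_def B_def c_def)
  obtain m where m: "m \<in> A" "v \<in> m"
    using hd p_eq by (auto simp: A_def c_def)
  moreover have "card m = 2"
    using edges m(1) by (auto simp: A_def split: if_splits)
  ultimately obtain w where w: "m = {v, w}" "w \<noteq> v"
    by (auto simp: card_2_iff doubleton_eq_iff)
  have "m \<noteq> {v, y}"
    using m(1) vy by blast
  then have "m \<notin> B"
    using matching_edge_unique[OF AB(1), of m "{v, y}" v] m(2) vy by blast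
  then have m_sd: "m \<in> sym_diff M N"
    using AB(2) m(1) by blast
  have "m \<notin> path_edges p"
    using path_edge_at_hd[of v y ys m] p(1) p_eq m(2) \<open>m \<noteq> {v, y}\<close> by blast
  have "w \<notin> set p"
  proof
    assume "w \<in> set p"
    moreover have "w \<noteq> hd p"
      using p_eq w by simp
    ultimately have "m \<in> path_edges p"
      using alternating_path_closed[OF M N p(2-4)] m_sd w(1) by blast
    with \<open>m \<notin> path_edges p\<close> show False ..
  qed
  moreover have "w \<in> \<Union>(M \<union> N)"
    using m w by (auto simp: A_def split: if_splits)
  moreover have "alternates (even (length (w # p))) M N (w # p)"
    using p(2) AB(3) m(1) \<open>m \<notin> B\<close> w p_eq by (auto simp: c_def insert_commute)
  ultimately show ?thesis
    using that by blast
qed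

text \<open>The flag even (length p) makes the last edge of p, at the M-exposed vertex last p,
  an edge of N - M; growing p at its head until the alternation cannot be continued yields
  a whole component of the graph with edge set sym_diff M N.\<close>
lemma maximal_alternating_path:
  assumes M: "matching M" and N: "matching N"
    and fin: "finite (M \<union> N)" and edges: "\<forall>e\<in>M \<union> N. card e = 2"
  shows "distinct p \<Longrightarrow> alternates (even (length p)) M N p \<Longrightarrow> 2 \<le> length p \<Longrightarrow>
    last p \<notin> \<Union>M \<Longrightarrow>
    \<exists>p'. distinct p' \<and> alternates (even (length p')) M N p' \<and> 2 \<le> length p' \<and>
      last p' \<notin> \<Union>M \<and> hd p' \<notin> \<Union>(if even (length p') then M else N)"
proof (induction "card (\<Union>(M \<union> N) - set p)" arbitrary: p rule: less_induct)
  case less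
  show ?case
  proof (cases "hd p \<in> \<Union>(if even (length p) then M else N)")
    case False
    with less.prems show ?thesis by blast
  next
    case True
    with alternating_path_extend_at_hd[OF M N edges less.prems] obtain w
      where w: "w \<in> \<Union>(M \<union> N) - set p" "alternates (even (length (w # p))) M N (w # p)" .
    have "finite (\<Union>(M \<union> N))"
      using fin edges by (rule finite_Union_edges)
    with w(1) have "card (\<Union>(M \<union> N) - set (w # p)) < card (\<Union>(M \<union> N) - set p)"
      by (metis Diff_insert card_Diff1_less finite_Diff list.simps(15))
    moreover have "distinct (w # p)" "2 \<le> length (w # p)" "last (w # p) \<notin> \<Union>M"
      using less.prems w(1) by auto
    ultimately show ?thesis
      using less.hyps[of "w # p"] w(2) by blast
  qed
qed

definition alternating_augmenting :: "'a set set \<Rightarrow> 'a set set \<Rightarrow> 'a list \<Rightarrow> bool" where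
  "alternating_augmenting M N q \<longleftrightarrow>
     distinct q \<and> 2 \<le> length q \<and> even (length q) \<and> alternates True M N q \<and>
     hd q \<notin> \<Union>M \<and> last q \<notin> \<Union>M"

lemma alternating_augmenting_imp_augmenting_path:
  assumes "alternating_augmenting M N q" "M \<union> N \<subseteq> G"
  shows "augmenting_path G M q"
proof -
  have "{q ! i, q ! Suc i} \<in> G \<and> ({q ! i, q ! Suc i} \<in> M \<longleftrightarrow> odd i)" if "i < length q - 1" for i
    using assms that unfolding alternating_augmenting_def alternates_iff_nth
    by (cases "even i") (auto split: if_splits)
  with assms(1) show ?thesis
    unfolding alternating_augmenting_def augmenting_path_def by blast
qed

lemma alternating_augmenting_Diff_component:
  assumes q: "alternating_augmenting (M - E) (N - E) q"
    and closed: "\<forall>f\<in>sym_diff M N. f \<inter> \<Union>E \<noteq> {} \<longrightarrow> f \<in> E"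
  shows "alternating_augmenting M N q"
proof -
  have edges: "path_edges q \<subseteq> sym_diff M N - E"
    using q alternates_path_edges unfolding alternating_augmenting_def by blast
  have "z \<notin> \<Union>M" if "z \<in> {hd q, last q}" for z
  proof
    assume "z \<in> \<Union>M"
    moreover have "z \<notin> \<Union>(M - E)"
      using q that unfolding alternating_augmenting_def by auto
    ultimately have "z \<in> \<Union>E" by blast
    moreover have "2 \<le> length q" "z \<in> set q"
      using q that unfolding alternating_augmenting_def by (auto intro: hd_in_set last_in_set)
    then obtain g where "g \<in> path_edges q" "z \<in> g"
      using Union_path_edges[of q] by blast
    ultimately show False
      using edges closed by blast
  qed
  moreover have "alternates True M N q"
    using q unfolding alternating_augmenting_def by (auto elim: alternates_mono)
  ultimately show ?thesis
    using q unfolding alternating_augmenting_def by simp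
qed

text \<open>For finite S this says that the paths in ps are pairwise edge-disjoint and use only
  edges of S, in the counting form in which it is used.\<close>
definition edge_disjoint_within :: "'a set set \<Rightarrow> 'a list list \<Rightarrow> bool" where
  "edge_disjoint_within S ps \<longleftrightarrow> (\<forall>X. (\<Sum>q\<leftarrow>ps. card (path_edges q \<inter> X)) \<le> card (S \<inter> X))"

lemma edge_disjoint_within_mono:
  "edge_disjoint_within S' ps \<Longrightarrow> S' \<subseteq> S \<Longrightarrow> finite S \<Longrightarrow> edge_disjoint_within S ps"
  unfolding edge_disjoint_within_def by (meson card_mono finite_Int inf_mono order_refl order_trans)

lemma edge_disjoint_within_Cons:
  assumes "edge_disjoint_within (S - path_edges q) ps" "path_edges q \<subseteq> S" "finite S"
  shows "edge_disjoint_within S (q # ps)"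
  unfolding edge_disjoint_within_def
proof
  fix X
  have "card (S \<inter> X) = card (path_edges q \<inter> X \<union> (S - path_edges q) \<inter> X)"
    using assms(2) by (intro arg_cong[where f = card]) blast
  also have "\<dots> = card (path_edges q \<inter> X) + card ((S - path_edges q) \<inter> X)"
    using assms(3) by (intro card_Un_disjoint) (auto simp: finite_path_edges)
  finally have "card (S \<inter> X) = card (path_edges q \<inter> X) + card ((S - path_edges q) \<inter> X)" .
  with assms(1) show "(\<Sum>q\<leftarrow>q # ps. card (path_edges q \<inter> X)) \<le> card (S \<inter> X)"
    unfolding edge_disjoint_within_def by simp
qed

lemma card_Diff_le_if_covered:
  assumes fin: "finite (M \<union> N)" and M: "matching M" and N: "matching N"
    and edges: "\<forall>e\<in>M \<union> N. card e = 2" and covered: "\<forall>f\<in>N - M. f \<subseteq> \<Union>M"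
  shows "card (N - M) \<le> card (M - N)"
proof -
  have "\<Union>(N - M) \<subseteq> \<Union>(M - N)"
  proof
    fix z assume "z \<in> \<Union>(N - M)"
    then obtain f m where f: "f \<in> N - M" "z \<in> f" and m: "m \<in> M" "z \<in> m"
      using covered by blast
    then have "m \<notin> N"
      using matching_edge_unique[OF N, of m f z] by blast
    with m show "z \<in> \<Union>(M - N)" by blast
  qed
  then have "card (\<Union>(N - M)) \<le> card (\<Union>(M - N))"
    using fin edges by (intro card_mono finite_Union_edges) auto
  moreover have "card (\<Union>(N - M)) = 2 * card (N - M)"
    using fin edges by (intro card_Union_matching matching_subset[OF N]) auto
  moreover have "card (\<Union>(M - N)) = 2 * card (M - N)"
    using fin edges by (intro card_Union_matching matching_subset[OF M]) auto
  ultimately show ?thesis by simp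
qed

lemma alternating_component_exists:
  assumes fin: "finite (M \<union> N)" and M: "matching M" and N: "matching N"
    and edges: "\<forall>e\<in>M \<union> N. card e = 2" and f: "f \<in> N - M" "u \<in> f" "u \<notin> \<Union>M"
  obtains p where "distinct p" "alternates (even (length p)) M N p" "2 \<le> length p"
    "last p \<notin> \<Union>M" "hd p \<notin> \<Union>(if even (length p) then M else N)"
    "\<forall>g\<in>sym_diff M N. g \<inter> \<Union>(path_edges p) \<noteq> {} \<longrightarrow> g \<in> path_edges p"
proof -
  obtain b where b: "f = {b, u}" "b \<noteq> u"
    using edges f(1,2) unfolding card_2_iff by (metis DiffD1 UnCI doubleton_eq_iff insertE singletonD)
  then have "distinct [b, u]" "alternates (even (length [b, u])) M N [b, u]"
    using f(1) by auto
  then obtain p where p: "distinct p" "alternates (even (length p)) M N p" "2 \<le> length p"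
      "last p \<notin> \<Union>M" "hd p \<notin> \<Union>(if even (length p) then M else N)"
    using maximal_alternating_path[OF M N fin edges, of "[b, u]"] f(3) by auto
  with alternating_component[OF M N p(2-4)] show ?thesis
    using that by simp
qed

definition augmenting_path_packing :: "'a set set \<Rightarrow> 'a set set \<Rightarrow> 'a list list \<Rightarrow> bool" where
  "augmenting_path_packing M N ps \<longleftrightarrow>
     (\<forall>q\<in>set ps. alternating_augmenting M N q) \<and> card (N - M) \<le> card (M - N) + length ps \<and>
     edge_disjoint_within (sym_diff M N) ps"

lemma augmenting_path_packing_Diff_component:
  assumes fin: "finite (M \<union> N)"
    and p: "distinct p" "alternates (even (length p)) M N p" "2 \<le> length p"
      "last p \<notin> \<Union>M" "hd p \<notin> \<Union>(if even (length p) then M else N)"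
    and closed: "\<forall>g\<in>sym_diff M N. g \<inter> \<Union>(path_edges p) \<noteq> {} \<longrightarrow> g \<in> path_edges p"
    and ps: "augmenting_path_packing (M - path_edges p) (N - path_edges p) ps"
  shows "\<exists>ps'. augmenting_path_packing M N ps'"
proof -
  define E where "E = path_edges p"
  have E: "E \<subseteq> sym_diff M N" "finite (sym_diff M N)"
    using alternates_path_edges[OF p(2)] fin by (auto simp: E_def)
  have "sym_diff (M - E) (N - E) = sym_diff M N - E"
    "(N - E) - (M - E) = (N - M) - E" "(M - E) - (N - E) = (M - N) - E"
    by blast+
  with ps have ps: "\<forall>q\<in>set ps. alternating_augmenting (M - E) (N - E) q"
    "card ((N - M) - E) \<le> card ((M - N) - E) + length ps"
    "edge_disjoint_within (sym_diff M N - E) ps"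
    unfolding augmenting_path_packing_def E_def by auto
  have lifted: "\<forall>q\<in>set ps. alternating_augmenting M N q"
    using ps(1) alternating_augmenting_Diff_component[of M E N] closed unfolding E_def by blast
  have "card (N - M) = card (E \<inter> (N - M)) + card ((N - M) - E)"
    "card (M - N) = card (E \<inter> (M - N)) + card ((M - N) - E)"
    using card_Int_Diff[of "N - M" E] card_Int_Diff[of "M - N" E] fin
    by (simp_all add: Int_commute)
  with ps(2) card_alternates_edges_balance[OF p(1-3)]
  have count: "card (N - M) \<le> card (M - N) + length ps + (if even (length p) then 1 else 0)"
    unfolding E_def by simp
  show ?thesis
  proof (cases "even (length p)")
    case True
    then have "alternating_augmenting M N p"
      using p unfolding alternating_augmenting_def by simp
    moreover have "edge_disjoint_within (sym_diff M N) (p # ps)"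
      using ps(3) E by (intro edge_disjoint_within_Cons) (auto simp: E_def)
    ultimately show ?thesis
      using lifted count True unfolding augmenting_path_packing_def by (intro exI[of _ "p # ps"]) auto
  next
    case False
    then show ?thesis
      using lifted count ps(3) E edge_disjoint_within_mono[of _ ps "sym_diff M N"]
      unfolding augmenting_path_packing_def by (intro exI[of _ ps]) auto
  qed
qed

lemma augmenting_path_packing_exists:
  assumes "finite (M \<union> N)" "matching M" "matching N" "\<forall>e\<in>M \<union> N. card e = 2"
  shows "\<exists>ps. augmenting_path_packing M N ps"
  using assms
proof (induction "card (M \<union> N)" arbitrary: M N rule: less_induct)
  case less
  show ?case
  proof (cases "\<forall>f\<in>N - M. f \<subseteq> \<Union>M")
    case True
    with card_Diff_le_if_covered[OF less.prems] show ?thesis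
      unfolding augmenting_path_packing_def edge_disjoint_within_def by (intro exI[of _ "[]"]) simp
  next
    case False
    then obtain f u where "f \<in> N - M" "u \<in> f" "u \<notin> \<Union>M"
      by blast
    with alternating_component_exists[OF less.prems] obtain p where
      p: "distinct p" "alternates (even (length p)) M N p" "2 \<le> length p"
        "last p \<notin> \<Union>M" "hd p \<notin> \<Union>(if even (length p) then M else N)"
        "\<forall>g\<in>sym_diff M N. g \<inter> \<Union>(path_edges p) \<noteq> {} \<longrightarrow> g \<in> path_edges p" .
    let ?E = "path_edges p"
    have "?E \<subseteq> M \<union> N" "?E \<noteq> {}"
      using alternates_path_edges[OF p(2)] Union_path_edges[OF p(3)] p(3) by auto
    then have "card ((M - ?E) \<union> (N - ?E)) < card (M \<union> N)"
      using less.prems(1) by (intro psubset_card_mono) auto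
    moreover have "finite ((M - ?E) \<union> (N - ?E))" "matching (M - ?E)" "matching (N - ?E)"
      "\<forall>e\<in>(M - ?E) \<union> (N - ?E). card e = 2"
      using less.prems matching_subset[of M] matching_subset[of N] by auto
    ultimately obtain ps where "augmenting_path_packing (M - ?E) (N - ?E) ps"
      using less.hyps by blast
    with augmenting_path_packing_Diff_component[OF less.prems(1) p] show ?thesis .
  qed
qed

lemma card_sym_diff_balance:
  "finite M \<Longrightarrow> finite N \<Longrightarrow> card N + card (M - N) = card M + card (N - M)"
  using card_Int_Diff[of N M] card_Int_Diff[of M N] by (simp add: Int_commute)

lemma edge_disjoint_augmenting_paths:
  assumes G: "finite G" "\<forall>e\<in>G. card e = 2" and M: "matching_in G M" and N: "matching_in G N"
  obtains ps where "\<forall>q\<in>set ps. augmenting_path G M q" "card N \<le> card M + length ps"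
    "edge_disjoint_within (sym_diff M N) ps"
proof -
  have MN: "M \<union> N \<subseteq> G" "matching M" "matching N"
    using M N unfolding matching_in_def by auto
  with G have "finite (M \<union> N)" "\<forall>e\<in>M \<union> N. card e = 2"
    using finite_subset by blast+
  with MN obtain ps where ps: "\<forall>q\<in>set ps. alternating_augmenting M N q"
    "card (N - M) \<le> card (M - N) + length ps" "edge_disjoint_within (sym_diff M N) ps"
    using augmenting_path_packing_exists unfolding augmenting_path_packing_def by blast
  moreover have "card N \<le> card M + length ps"
    using ps(2) card_sym_diff_balance[of M N] \<open>finite (M \<union> N)\<close> by simp
  ultimately show ?thesis
    using that alternating_augmenting_imp_augmenting_path[OF _ MN(1)] by blast
qed

lemma two_edge_disjoint_augmenting_paths:
  assumes G: "finite G" "\<forall>e\<in>G. card e = 2" and M: "matching_in G M" and N: "matching_in G N"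
    and larger: "card M + 2 \<le> card N"
  obtains q1 q2 where "augmenting_path G M q1" "augmenting_path G M q2"
    "path_edges q1 \<inter> path_edges q2 = {}" "path_len q1 + path_len q2 \<le> card (sym_diff M N)"
proof -
  obtain ps where ps: "\<forall>q\<in>set ps. augmenting_path G M q" "card N \<le> card M + length ps"
    "edge_disjoint_within (sym_diff M N) ps"
    using edge_disjoint_augmenting_paths[OF G M N] by blast
  moreover from ps(2) larger have "2 \<le> length ps"
    by simp
  then obtain q1 q2 qs where ps_eq: "ps = q1 # q2 # qs"
    by (elim length_ge_2_cases)
  have bound: "card (path_edges q1 \<inter> X) + card (path_edges q2 \<inter> X) \<le> card (sym_diff M N \<inter> X)"
    for X
  proof -
    have "card (path_edges q1 \<inter> X) + card (path_edges q2 \<inter> X) \<le> (\<Sum>q\<leftarrow>ps. card (path_edges q \<inter> X))"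
      by (simp add: ps_eq)
    also have "\<dots> \<le> card (sym_diff M N \<inter> X)"
      using ps(3) unfolding edge_disjoint_within_def by blast
    finally show ?thesis .
  qed
  let ?I = "path_edges q1 \<inter> path_edges q2"
  have "card (sym_diff M N \<inter> ?I) \<le> card ?I"
    by (intro card_mono) (auto simp: finite_path_edges)
  moreover have "path_edges q1 \<inter> ?I = ?I" "path_edges q2 \<inter> ?I = ?I"
    by blast+
  ultimately have "card ?I = 0"
    using bound[of ?I] by simp
  then have "?I = {}"
    by (simp add: finite_path_edges)
  moreover have "distinct q1" "distinct q2"
    using ps(1) ps_eq unfolding augmenting_path_def by auto
  then have "path_len q1 + path_len q2 \<le> card (sym_diff M N)"
    using bound[of UNIV] by (simp add: card_path_edges)
  ultimately show ?thesis
    using that ps(1) ps_eq by auto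
qed

lemma card_sym_diff_sym_diff_le:
  "finite A \<Longrightarrow> finite B \<Longrightarrow> card (sym_diff M (sym_diff (sym_diff M A) B)) \<le> card A + card B"
  by (rule order_trans[OF card_mono card_Un_le]) auto

definition no_short_augmenting_path :: "nat \<Rightarrow> 'a set set \<Rightarrow> 'a set set \<Rightarrow> bool" where
  "no_short_augmenting_path k G M \<longleftrightarrow> (\<forall>p. augmenting_path G M p \<longrightarrow> k \<le> path_len p)"

lemma no_short_augmenting_path_augment_shortest:
  assumes G: "finite G" "\<forall>x\<in>G. card x = 2" and M: "matching_in G M"
    and old: "\<And>q. augmenting_path G M q \<Longrightarrow> e \<notin> path_edges q \<Longrightarrow> k \<le> path_len q"
    and p: "augmenting_path G M p" "e \<in> path_edges p" "path_len p < k"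
    and shortest: "\<And>q. augmenting_path G M q \<Longrightarrow> e \<in> path_edges q \<Longrightarrow> path_len p \<le> path_len q"
  shows "no_short_augmenting_path k G (sym_diff M (path_edges p))"
  unfolding no_short_augmenting_path_def
proof (intro allI impI)
  let ?M' = "sym_diff M (path_edges p)"
  fix Q assume Q: "augmenting_path G ?M' Q"
  let ?M'' = "sym_diff ?M' (path_edges Q)"
  have fin: "finite M" "finite ?M'"
    using G M matching_in_augment[OF M p(1)] finite_subset unfolding matching_in_def by blast+
  have M'': "matching_in G ?M''"
    using matching_in_augment[OF matching_in_augment[OF M p(1)] Q] .
  have "card ?M'' = card M + 2"
    using card_augment[OF fin(1) p(1)] card_augment[OF fin(2) Q] by simp
  then obtain q1 q2 where q: "augmenting_path G M q1" "augmenting_path G M q2"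
    "path_edges q1 \<inter> path_edges q2 = {}" "path_len q1 + path_len q2 \<le> card (sym_diff M ?M'')"
    using two_edge_disjoint_augmenting_paths[OF G M M''] by auto
  have "k + path_len p \<le> path_len q1 + path_len q2"
  proof (cases "e \<in> path_edges q1")
    case True
    with q(3) have "e \<notin> path_edges q2" by blast
    with True show ?thesis
      using old[OF q(2)] shortest[OF q(1)] by simp
  next
    case False
    then have "k \<le> path_len q1" by (rule old[OF q(1)])
    moreover have "path_len p \<le> path_len q2"
      using old[OF q(2)] shortest[OF q(2)] p(3) by fastforce
    ultimately show ?thesis by simp
  qed
  also have "\<dots> \<le> card (sym_diff M ?M'')"
    by (rule q(4))
  also have "\<dots> \<le> path_len p + path_len Q"
    using card_sym_diff_sym_diff_le[of "path_edges p" "path_edges Q" M]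
    unfolding card_path_edges_augmenting_path[OF p(1)] card_path_edges_augmenting_path[OF Q]
    by (simp add: finite_path_edges)
  finally show "k \<le> path_len Q" by simp
qed

lemma alg_step_invariant:
  assumes G: "finite G" "\<forall>x\<in>insert e G. card x = 2"
    and M: "matching_in G M" "no_short_augmenting_path k G M"
    and step: "alg_step k (insert e G) M e M'"
  shows "matching_in (insert e G) M' \<and> no_short_augmenting_path k (insert e G) M'"
proof -
  let ?G = "insert e G"
  define P where "P = {p. augmenting_path ?G M p \<and> e \<in> path_edges p}"
  have M_ext: "matching_in ?G M"
    using M(1) unfolding matching_in_def by blast
  have old: "k \<le> path_len q" if "augmenting_path ?G M q" "e \<notin> path_edges q" for q
    using M(2) augmenting_path_insert[OF that] unfolding no_short_augmenting_path_def by blast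
  have len_pos: "0 < path_len q" if "augmenting_path ?G M q" for q
    using that unfolding augmenting_path_def path_len_def by simp
  have step': "(\<forall>p\<in>P. k - 1 < path_len p) \<and> M' = M \<or>
    (\<exists>p\<in>P. (\<forall>q\<in>P. path_len p \<le> path_len q) \<and> path_len p \<le> k - 1 \<and>
      M' = sym_diff M (path_edges p))"
    using step unfolding alg_step_def Let_def P_def by simp
  show ?thesis
  proof (cases "(\<forall>p\<in>P. k - 1 < path_len p) \<and> M' = M")
    case True
    have "k \<le> path_len q" if "augmenting_path ?G M q" for q
    proof (cases "e \<in> path_edges q")
      case True
      with \<open>(\<forall>p\<in>P. k - 1 < path_len p) \<and> M' = M\<close> that show ?thesis
        unfolding P_def by auto
    next
      case False
      with that show ?thesis by (rule old)
    qed
    with True M_ext show ?thesis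
      unfolding no_short_augmenting_path_def by simp
  next
    case False
    with step' obtain p where p: "augmenting_path ?G M p" "e \<in> path_edges p"
      "\<forall>q\<in>P. path_len p \<le> path_len q" "path_len p \<le> k - 1" "M' = sym_diff M (path_edges p)"
      unfolding P_def by blast
    moreover have "path_len p < k"
      using p(1,4) len_pos[of p] by simp
    ultimately show ?thesis
      using no_short_augmenting_path_augment_shortest[OF _ G(2) M_ext old p(1,2)] matching_in_augment[OF M_ext p(1)]
        G(1) unfolding P_def by simp
  qed
qed

lemma alg_run_invariant:
  "alg_run k es M \<Longrightarrow> \<forall>x\<in>set es. card x = 2 \<Longrightarrow>
    matching_in (set es) M \<and> no_short_augmenting_path k (set es) M"
proof (induction rule: alg_run.induct)
  case (init k)
  then show ?case
    unfolding matching_in_def matching_def no_short_augmenting_path_def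
    by (simp add: augmenting_path_empty)
next
  case (step k es M e M')
  then show ?case
    using alg_step_invariant[of "set es" e M k M'] by simp
qed

lemma card_le_if_no_short_augmenting_path:
  assumes G: "finite G" "\<forall>e\<in>G. card e = 2" and M: "matching_in G M" and N: "matching_in G N"
    and long: "no_short_augmenting_path (2 * r) G M"
  shows "r * card N \<le> (r + 1) * card M"
proof -
  obtain ps where ps: "\<forall>q\<in>set ps. augmenting_path G M q" "card N \<le> card M + length ps"
    "edge_disjoint_within (sym_diff M N) ps"
    using edge_disjoint_augmenting_paths[OF G M N] by blast
  have "r \<le> card (path_edges q \<inter> M)" if "q \<in> set ps" for q
  proof -
    have "augmenting_path G M q"
      using ps(1) that by blast
    with long have "2 * r \<le> path_len q"
      unfolding no_short_augmenting_path_def by blast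
    with card_augmenting_path_matched_edges[OF \<open>augmenting_path G M q\<close>] show ?thesis
      by simp
  qed
  then have "length ps * r \<le> (\<Sum>q\<leftarrow>ps. card (path_edges q \<inter> M))"
    using sum_list_mono[of ps "\<lambda>_. r"] by (simp add: sum_list_triv)
  also have "\<dots> \<le> card (sym_diff M N \<inter> M)"
    using ps(3) unfolding edge_disjoint_within_def by blast
  also have "\<dots> \<le> card M"
    using G M finite_subset unfolding matching_in_def by (intro card_mono) auto
  finally have "length ps * r \<le> card M" .
  have "r * card N \<le> r * (card M + length ps)"
    using ps(2) by (rule mult_le_mono2)
  also have "\<dots> \<le> (r + 1) * card M"
    using \<open>length ps * r \<le> card M\<close> by (simp add: algebra_simps)
  finally show ?thesis .
qed

lemma OPT_attained:
  assumes "finite G"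
  obtains N where "matching_in G N" "card N = OPT G"
proof -
  have "{card N | N. matching_in G N} \<subseteq> card ` Pow G"
    unfolding matching_in_def by blast
  then have "finite {card N | N. matching_in G N}"
    using assms by (meson finite_Pow_iff finite_imageI finite_subset)
  moreover have "matching_in G {}"
    unfolding matching_in_def matching_def by simp
  ultimately have "OPT G \<in> {card N | N. matching_in G N}"
    unfolding OPT_def by (intro Max_in) blast+
  then obtain N where "OPT G = card N" "matching_in G N"
    by blast
  with that show ?thesis
    by simp
qed

theorem theorem5:
  fixes V :: "'a set" and es :: "'a set list" and k :: nat and M :: "'a set set"
  assumes "k \<ge> 2" and "even k"
    and "finite V"
    and "distinct es"
    and "\<forall>e\<in>set es. \<exists>u v. e = {u, v} \<and> u \<noteq> v \<and> u \<in> V \<and> v \<in> V"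
    and "alg_run k es M"
  shows "real (card M) \<ge> (1 - 2 / (real k + 2)) * real (OPT (set es))"
proof -
  obtain r where k: "k = 2 * r"
    using assms(2) by (elim evenE)
  have edges: "\<forall>e\<in>set es. card e = 2"
    using assms(5) unfolding card_2_iff by blast
  then have M: "matching_in (set es) M" "no_short_augmenting_path (2 * r) (set es) M"
    using alg_run_invariant[OF assms(6)] k by auto
  obtain N where N: "matching_in (set es) N" "card N = OPT (set es)"
    using OPT_attained[OF List.finite_set] by blast
  have "r * OPT (set es) \<le> card M * (r + 1)"
    using card_le_if_no_short_augmenting_path[OF _ edges M(1) N(1) M(2)] N(2) by (simp add: mult.commute)
  then have bound: "real r * OPT (set es) \<le> card M * (real r + 1)"
    by (metis of_nat_1 of_nat_add of_nat_le_iff of_nat_mult)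
  have "(1 - 2 / (real k + 2)) * OPT (set es) = real r * OPT (set es) / (real r + 1)"
    using k by (simp add: field_simps)
  also have "\<dots> \<le> card M"
    using bound by (simp add: pos_divide_le_eq)
  finally show ?thesis .
qed

end
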